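(* Let $U$ be a finite set and let $Q=(q_{ij})$ and $Q'=(q'_{ij})$ be two PCMC rate families on $U$ with stationary distributions $\pi=\pi_U$ and $\pi'=\pi'_U$ of their chains on $U$. Suppose $A_1,\dots,A_k$ is a contractible partition of $U$ for both $Q$ and $Q'$ with respect to the same $\Lambda=(\lambda_{ij})_{i\ne j}$. Then for every $i\in\{1,\dots,k\}$, \[\sum_{x\in A_i}p_{xU}=\sum_{x\in A_i}p'_{xU},\] i.e. $\pi(A_i)=\pi'(A_i)$.
   Context: Pairwise Choice Markov Chain (PCMC) model: $U$ is a finite set of alternatives; the parameters are off-diagonal rates $q_{ij}\ge 0$ ($i\neq j\in U$) subject to $q_{ij}+q_{ji}\ge 1$ for all distinct $i,j$. $Q_U$ is the $U\times U$ matrix with these off-diagonal entries and diagonal entries $q_{ii}=-\sum_{j\neq i} q_{ij}$; $\pi_U$ is the unique probability vector with $\pi_U^TQ_U=0$, and $p_{iU}=\pi_U(i)$ (similarly $p'_{iU}=\pi'_U(i)$ for $Q'$). For $A\subseteq U$, $\pi(A)=\sum_{x\in A}\pi(x)$. Contractible partition: a partition of $U$ into nonempty sets $A_1,\dots,A_k$ is contractible with respect to $\Lambda=(\lambda_{ij})_{i\ne j\in\{1,\dots,k\}}$ if $q_{ab}=\lambda_{ij}$ for all $a\in A_i$, $b\in A_j$, $i\ne j$ (rates within a single block are unrestricted beyond the PCMC constraints). *)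

theory Defs
  imports "HOL-Analysis.Analysis"
begin

definition pcmc_rates :: "'a set \<Rightarrow> ('a \<Rightarrow> 'a \<Rightarrow> real) \<Rightarrow> bool" where
  "pcmc_rates U q \<longleftrightarrow> finite U \<and>
     (\<forall>i\<in>U. \<forall>j\<in>U. i \<noteq> j \<longrightarrow> q i j \<ge> 0 \<and> q i j + q j i \<ge> 1)"

definition rate_matrix :: "'a set \<Rightarrow> ('a \<Rightarrow> 'a \<Rightarrow> real) \<Rightarrow> 'a \<Rightarrow> 'a \<Rightarrow> real" where
  "rate_matrix U q i j = (if i = j then - (\<Sum>l\<in>U - {i}. q i l) else q i j)"

definition is_stationary :: "'a set \<Rightarrow> ('a \<Rightarrow> 'a \<Rightarrow> real) \<Rightarrow> ('a \<Rightarrow> real) \<Rightarrow> bool" where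
  "is_stationary U q p \<longleftrightarrow>
     (\<forall>x\<in>U. p x \<ge> 0) \<and> (\<Sum>x\<in>U. p x) = 1 \<and>
     (\<forall>j\<in>U. (\<Sum>i\<in>U. p i * rate_matrix U q i j) = 0)"

definition pcmc_pi :: "'a set \<Rightarrow> ('a \<Rightarrow> 'a \<Rightarrow> real) \<Rightarrow> 'a \<Rightarrow> real" where
  "pcmc_pi U q = (THE p. is_stationary U q p \<and> (\<forall>x. x \<notin> U \<longrightarrow> p x = 0))"

definition is_partition :: "'a set \<Rightarrow> nat \<Rightarrow> (nat \<Rightarrow> 'a set) \<Rightarrow> bool" where
  "is_partition U k A \<longleftrightarrow>
     (\<forall>i\<in>{1..k}. A i \<noteq> {}) \<and>
     (\<forall>i\<in>{1..k}. \<forall>j\<in>{1..k}. i \<noteq> j \<longrightarrow> A i \<inter> A j = {}) \<and>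
     (\<Union>i\<in>{1..k}. A i) = U"

definition contractible_partition :: "'a set \<Rightarrow> ('a \<Rightarrow> 'a \<Rightarrow> real) \<Rightarrow> nat \<Rightarrow> (nat \<Rightarrow> 'a set)
    \<Rightarrow> (nat \<Rightarrow> nat \<Rightarrow> real) \<Rightarrow> bool" where
  "contractible_partition U q k A \<Lambda> \<longleftrightarrow> is_partition U k A \<and>
     (\<forall>i\<in>{1..k}. \<forall>j\<in>{1..k}. i \<noteq> j \<longrightarrow> (\<forall>a\<in>A i. \<forall>b\<in>A j. q a b = \<Lambda> i j))"

end

theory Submission
  imports Defs
begin

text \<open>Lumping the chain along the partition gives a chain on the blocks whose rates
  \<open>\<Lambda> m j * card (A j)\<close> do not depend on \<open>q\<close>: the block sums of \<open>Q\<^sub>U\<close> are exactly the entries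
  of the lumped rate matrix, so the block masses of any stationary vector are stationary for the
  lumped chain. Between any two blocks the lumped chain still has positive rate in at least one
  direction, and such chains have a unique stationary distribution. This is shown by induction
  on the number of states: removing a state \<open>s\<close> with positive exit rate and redirecting every
  jump into \<open>s\<close> to the state where \<open>s\<close> is left yields a chain of the same kind whose stationary distributions are exactly the
  normalised restrictions of those of the original chain.\<close>

definition balanced :: "'a set \<Rightarrow> ('a \<Rightarrow> 'a \<Rightarrow> real) \<Rightarrow> ('a \<Rightarrow> real) \<Rightarrow> bool" where
  "balanced V r p \<longleftrightarrow> (\<forall>j\<in>V. (\<Sum>i\<in>V - {j}. p i * r i j) = p j * (\<Sum>l\<in>V - {j}. r j l))"

definition pairwise_positive_rates :: "'a set \<Rightarrow> ('a \<Rightarrow> 'a \<Rightarrow> real) \<Rightarrow> bool" where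
  "pairwise_positive_rates V r \<longleftrightarrow> finite V \<and>
     (\<forall>i\<in>V. \<forall>j\<in>V. i \<noteq> j \<longrightarrow> 0 \<le> r i j \<and> 0 < r i j + r j i)"

lemma pcmc_rates_pairwise_positive: "pcmc_rates U q \<Longrightarrow> pairwise_positive_rates U q"
  unfolding pcmc_rates_def pairwise_positive_rates_def by force

lemma rate_matrix_off_diagonal_sum:
  "(\<Sum>i\<in>U - {j}. f i * rate_matrix U q i j) = (\<Sum>i\<in>U - {j}. f i * q i j)"
  by (rule sum.cong) (auto simp: rate_matrix_def)

lemma rate_matrix_row_sum:
  assumes "finite U" "a \<in> U"
  shows "(\<Sum>b\<in>U. rate_matrix U q a b) = 0"
proof -
  have "(\<Sum>b\<in>U. rate_matrix U q a b) = rate_matrix U q a a + (\<Sum>b\<in>U - {a}. rate_matrix U q a b)"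
    using assms by (simp add: sum.remove)
  also have "(\<Sum>b\<in>U - {a}. rate_matrix U q a b) = (\<Sum>b\<in>U - {a}. q a b)"
    by (rule sum.cong) (auto simp: rate_matrix_def)
  finally show ?thesis by (simp add: rate_matrix_def)
qed

lemma is_stationary_iff_balanced:
  assumes "finite V"
  shows "is_stationary V r p \<longleftrightarrow> (\<forall>x\<in>V. 0 \<le> p x) \<and> sum p V = 1 \<and> balanced V r p"
proof -
  have "(\<Sum>i\<in>V. p i * rate_matrix V r i j) = (\<Sum>i\<in>V - {j}. p i * r i j) - p j * (\<Sum>l\<in>V - {j}. r j l)"
    if "j \<in> V" for j
    using assms that by (simp add: sum.remove rate_matrix_off_diagonal_sum rate_matrix_def)
  then show ?thesis
    unfolding is_stationary_def balanced_def by auto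
qed

lemma balanced_cong: "(\<And>x. x \<in> V \<Longrightarrow> p x = p' x) \<Longrightarrow> balanced V r p \<longleftrightarrow> balanced V r p'"
  unfolding balanced_def by (metis (no_types, lifting) DiffD1 sum.cong)

lemma balanced_divide: "balanced V r p \<Longrightarrow> balanced V r (\<lambda>x. p x / c)"
  unfolding balanced_def by (simp add: sum_divide_distrib[symmetric])

lemma is_stationary_normalize:
  assumes "finite V" "balanced V r p" "\<forall>x\<in>V. 0 \<le> p x" "0 < sum p V"
  shows "is_stationary V r (\<lambda>x. p x / sum p V)"
  using assms by (simp add: is_stationary_iff_balanced balanced_divide sum_divide_distrib[symmetric])

lemma is_stationary_eq_if_proportional:
  assumes "finite V" "is_stationary V r p" "is_stationary V r p'" "\<forall>x\<in>V. p x = c * p' x"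
  shows "\<forall>x\<in>V. p x = p' x"
proof -
  have "sum p V = c * sum p' V"
    using assms(4) by (simp add: sum_distrib_left)
  then have "c = 1"
    using assms(1-3) by (simp add: is_stationary_iff_balanced)
  then show ?thesis using assms(4) by simp
qed

lemma exists_positive_exit_rate:
  assumes "pairwise_positive_rates V r" "1 < card V"
  obtains s where "s \<in> V" "0 < (\<Sum>l\<in>V - {s}. r s l)"
proof -
  have fin: "finite V" using assms(1) by (simp add: pairwise_positive_rates_def)
  obtain a b where ab: "a \<in> V" "b \<in> V" "a \<noteq> b"
    using assms(2) card_le_Suc0_iff_eq[OF fin] by auto
  then have pos: "0 < r a b + r b a" and nonneg: "0 \<le> r a b" "0 \<le> r b a"
    using assms(1) by (auto simp: pairwise_positive_rates_def)
  have "r x y \<le> (\<Sum>l\<in>V - {x}. r x l)" if "x \<in> V" "y \<in> V" "x \<noteq> y" for x y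
    using assms(1) that fin
    by (intro member_le_sum) (auto simp: pairwise_positive_rates_def)
  then show ?thesis
    using that ab pos nonneg by (cases "0 < r a b") (fastforce+)
qed

locale state_elimination =
  fixes W :: "'a set" and s :: 'a and r :: "'a \<Rightarrow> 'a \<Rightarrow> real"
  assumes rates: "pairwise_positive_rates (insert s W) r"
    and s_notin_W: "s \<notin> W"
    and exit_rate_pos: "0 < (\<Sum>l\<in>W. r s l)"
begin

abbreviation exit_rate :: real where
  "exit_rate \<equiv> \<Sum>l\<in>W. r s l"

text \<open>The chain observed only while it is outside \<open>s\<close>: a jump into \<open>s\<close> is continued by the
  exit from \<open>s\<close>, which goes to \<open>j\<close> with probability \<open>r s j / exit_rate\<close>.\<close>
definition censored :: "'a \<Rightarrow> 'a \<Rightarrow> real" where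
  "censored i j = r i j + r i s * r s j / exit_rate"

lemma finite_W: "finite W"
  using rates by (simp add: pairwise_positive_rates_def)

lemma rate_nonneg: "i \<in> insert s W \<Longrightarrow> j \<in> insert s W \<Longrightarrow> i \<noteq> j \<Longrightarrow> 0 \<le> r i j"
  using rates unfolding pairwise_positive_rates_def by blast

lemma censored_pairwise_positive: "pairwise_positive_rates W censored"
  unfolding pairwise_positive_rates_def
proof (intro conjI[OF finite_W] ballI impI)
  fix i j assume ij: "i \<in> W" "j \<in> W" "i \<noteq> j"
  have "i \<noteq> s" "j \<noteq> s" using ij s_notin_W by auto
  then have "0 \<le> r i s" "0 \<le> r s j" "0 \<le> r j s" "0 \<le> r s i"
    using ij rate_nonneg by simp_all
  then have "0 \<le> r i s * r s j / exit_rate" "0 \<le> r j s * r s i / exit_rate"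
    using exit_rate_pos by simp_all
  moreover have "0 \<le> r i j" "0 < r i j + r j i"
    using rates ij by (auto simp: pairwise_positive_rates_def)
  ultimately show "0 \<le> censored i j \<and> 0 < censored i j + censored j i"
    unfolding censored_def by linarith
qed

lemma balanced_imp_inflow_s:
  "balanced (insert s W) r p \<Longrightarrow> p s * exit_rate = (\<Sum>i\<in>W. p i * r i s)"
  using s_notin_W unfolding balanced_def by auto

lemma balance_at_iff_censored:
  assumes inflow: "p s * exit_rate = (\<Sum>i\<in>W. p i * r i s)" and j: "j \<in> W"
  shows "(\<Sum>i\<in>insert s W - {j}. p i * r i j) = p j * (\<Sum>l\<in>insert s W - {j}. r j l) \<longleftrightarrow>
         (\<Sum>i\<in>W - {j}. p i * censored i j) = p j * (\<Sum>l\<in>W - {j}. censored j l)"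
proof -
  define R where "R = exit_rate"
  define B where "B = (\<Sum>i\<in>W - {j}. p i * r i s)"
  define D where "D = (\<Sum>l\<in>W - {j}. r s l)"
  have sW: "s \<notin> W - {j}" and insert_eq: "insert s W - {j} = insert s (W - {j})"
    using s_notin_W j by auto
  have R: "R = r s j + D" and inflow': "p s * R = p j * r j s + B"
    unfolding R_def B_def D_def using inflow finite_W j by (simp_all add: sum.remove)
  have "R \<noteq> 0" using exit_rate_pos R_def by simp
  have "(\<Sum>i\<in>W - {j}. p i * censored i j) = (\<Sum>i\<in>W - {j}. p i * r i j) + B * r s j / R"
    unfolding censored_def B_def R_def
    by (simp add: distrib_left sum.distrib sum_divide_distrib[symmetric] sum_distrib_right
        mult.assoc mult.left_commute)
  moreover have "(\<Sum>l\<in>W - {j}. censored j l) = (\<Sum>l\<in>W - {j}. r j l) + r j s * D / R"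
    unfolding censored_def D_def R_def
    by (simp add: sum.distrib sum_divide_distrib[symmetric] sum_distrib_left[symmetric])
  moreover have "p s * r s j - p j * r j s = B * r s j / R - p j * (r j s * D / R)"
  proof -
    have "B * r s j - p j * r j s * D = R * (p s * r s j - p j * r j s)"
    proof -
      have B: "B = p s * R - p j * r j s" using inflow' by simp
      show ?thesis unfolding B R by (simp add: algebra_simps)
    qed
    then show ?thesis
      using \<open>R \<noteq> 0\<close> by (simp add: diff_divide_distrib[symmetric] nonzero_eq_divide_eq) (simp add: algebra_simps)
  qed
  ultimately show ?thesis
    unfolding insert_eq using finite_W sW by (simp add: algebra_simps) linarith
qed

lemma balanced_iff_censored:
  assumes "p s * exit_rate = (\<Sum>i\<in>W. p i * r i s)"
  shows "balanced (insert s W) r p \<longleftrightarrow> balanced W censored p"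
proof -
  have "balanced (insert s W) r p \<longleftrightarrow>
    (\<forall>j\<in>W. (\<Sum>i\<in>insert s W - {j}. p i * r i j) = p j * (\<Sum>l\<in>insert s W - {j}. r j l))"
    using assms s_notin_W unfolding balanced_def by (auto simp: mult.commute)
  then show ?thesis
    using balance_at_iff_censored[OF assms] unfolding balanced_def by auto
qed

lemma stationary_extends_censored:
  assumes "is_stationary W censored p"
  shows "\<exists>p'. is_stationary (insert s W) r p'"
proof -
  define p0 where "p0 x = (if x = s then (\<Sum>i\<in>W. p i * r i s) / exit_rate else p x)" for x
  have on_W: "p0 x = p x" if "x \<in> W" for x
    using that s_notin_W by (auto simp: p0_def)
  have "(\<Sum>i\<in>W. p0 i * r i s) = (\<Sum>i\<in>W. p i * r i s)"
    using on_W by simp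
  then have inflow: "p0 s * exit_rate = (\<Sum>i\<in>W. p0 i * r i s)"
    using exit_rate_pos by (simp add: p0_def)
  have stat: "\<forall>x\<in>W. 0 \<le> p x" "sum p W = 1" "balanced W censored p"
    using assms finite_W by (simp_all add: is_stationary_iff_balanced)
  then have "balanced (insert s W) r p0"
    using balanced_iff_censored[OF inflow] balanced_cong[of W p0 p] on_W by simp
  moreover have "0 \<le> p0 s"
  proof -
    have "0 \<le> p i * r i s" if "i \<in> W" for i
      using that stat(1) s_notin_W rate_nonneg[of i s] by (metis insertCI mult_nonneg_nonneg)
    then show ?thesis
      using exit_rate_pos by (simp add: p0_def sum_nonneg)
  qed
  moreover have "sum p0 W = 1"
    using stat(2) on_W by simp
  ultimately have "is_stationary (insert s W) r (\<lambda>x. p0 x / sum p0 (insert s W))"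
    using finite_W s_notin_W stat(1) on_W
    by (intro is_stationary_normalize) auto
  then show ?thesis by blast
qed

lemma stationary_restricts_censored:
  assumes "is_stationary (insert s W) r p"
  shows "0 < sum p W" "is_stationary W censored (\<lambda>x. p x / sum p W)"
proof -
  have stat: "\<forall>x\<in>insert s W. 0 \<le> p x" "p s + sum p W = 1" "balanced (insert s W) r p"
    using assms finite_W s_notin_W by (simp_all add: is_stationary_iff_balanced)
  have inflow: "p s * exit_rate = (\<Sum>i\<in>W. p i * r i s)"
    using balanced_imp_inflow_s[OF stat(3)] .
  show pos: "0 < sum p W"
  proof (rule ccontr)
    assume "\<not> 0 < sum p W"
    then have "\<forall>x\<in>W. p x = 0"
      using stat(1) finite_W sum_nonneg_eq_0_iff[of W p] sum_nonneg[of W p] by force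
    then have "p s = 0" using inflow exit_rate_pos by simp
    then show False using stat(2) \<open>\<not> 0 < sum p W\<close> by simp
  qed
  show "is_stationary W censored (\<lambda>x. p x / sum p W)"
    using finite_W stat balanced_iff_censored[OF inflow] pos by (intro is_stationary_normalize) auto
qed

lemma stationary_eq_if_restrictions_eq:
  assumes p: "is_stationary (insert s W) r p" and p': "is_stationary (insert s W) r p'"
    and restrictions_eq: "\<forall>x\<in>W. p x / sum p W = p' x / sum p' W"
  shows "\<forall>x\<in>insert s W. p x = p' x"
proof -
  define c where "c = sum p W / sum p' W"
  have on_W: "p x = c * p' x" if "x \<in> W" for x
    using restrictions_eq that stationary_restricts_censored(1)[OF p] stationary_restricts_censored(1)[OF p']
    by (auto simp: c_def field_simps)
  have "balanced (insert s W) r p" "balanced (insert s W) r p'"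
    using p p' finite_W by (simp_all add: is_stationary_iff_balanced)
  note inflow = this[THEN balanced_imp_inflow_s]
  have "p s * exit_rate = c * (\<Sum>i\<in>W. p' i * r i s)"
    unfolding inflow(1) using on_W by (simp add: sum_distrib_left mult.assoc)
  also have "\<dots> = c * p' s * exit_rate"
    unfolding inflow(2)[symmetric] by simp
  finally have "p s = c * p' s"
    using exit_rate_pos by simp
  then show ?thesis
    using on_W p p' finite_W by (intro is_stationary_eq_if_proportional[of _ r p p' c]) auto
qed

end

lemma state_elimination_remove:
  assumes "pairwise_positive_rates V r" "s \<in> V" "0 < (\<Sum>l\<in>V - {s}. r s l)"
  shows "state_elimination (V - {s}) s r"
  using assms by (simp add: state_elimination_def insert_absorb)

theorem stationary_exists:
  assumes "pairwise_positive_rates V r" "V \<noteq> {}"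
  shows "\<exists>p. is_stationary V r p"
  using assms
proof (induction "card V" arbitrary: V r rule: less_induct)
  case less
  have fin: "finite V" using less.prems(1) by (simp add: pairwise_positive_rates_def)
  show ?case
  proof (cases "card V \<le> 1")
    case True
    then have "\<forall>a\<in>V. \<forall>b\<in>V. a = b"
      using card_le_Suc0_iff_eq[OF fin] by simp
    then obtain v where "V = {v}"
      using less.prems(2) by blast
    then have "is_stationary V r (\<lambda>_. 1)" by (simp add: is_stationary_def rate_matrix_def)
    then show ?thesis by blast
  next
    case False
    then obtain s where s: "s \<in> V" "0 < (\<Sum>l\<in>V - {s}. r s l)"
      by (auto intro: exists_positive_exit_rate[OF less.prems(1)])
    interpret E: state_elimination "V - {s}" s r
      using state_elimination_remove[OF less.prems(1) s] .
    have "card (V - {s}) \<noteq> 0"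
      using False fin s(1) by simp
    then have "V - {s} \<noteq> {}"
      by (metis card.empty)
    then obtain p where "is_stationary (V - {s}) E.censored p"
      using less.hyps[OF card_Diff1_less[OF fin s(1)]] E.censored_pairwise_positive by blast
    then show ?thesis
      using E.stationary_extends_censored insert_Diff[OF s(1)] by metis
  qed
qed

theorem stationary_unique:
  assumes "pairwise_positive_rates V r" "is_stationary V r p" "is_stationary V r p'"
  shows "\<forall>x\<in>V. p x = p' x"
  using assms
proof (induction "card V" arbitrary: V r p p' rule: less_induct)
  case less
  have fin: "finite V" using less.prems(1) by (simp add: pairwise_positive_rates_def)
  show ?case
  proof (cases "card V \<le> 1")
    case True
    then have "\<forall>a\<in>V. \<forall>b\<in>V. a = b"
      using card_le_Suc0_iff_eq[OF fin] by simp
    show ?thesis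
    proof
      fix x assume "x \<in> V"
      then have "V = {x}" using \<open>\<forall>a\<in>V. \<forall>b\<in>V. a = b\<close> by blast
      then show "p x = p' x" using less.prems(2,3) by (simp add: is_stationary_def)
    qed
  next
    case False
    then obtain s where s: "s \<in> V" "0 < (\<Sum>l\<in>V - {s}. r s l)"
      by (auto intro: exists_positive_exit_rate[OF less.prems(1)])
    interpret E: state_elimination "V - {s}" s r
      using state_elimination_remove[OF less.prems(1) s] .
    have V: "insert s (V - {s}) = V" using s(1) by blast
    have "\<forall>x\<in>V - {s}. p x / sum p (V - {s}) = p' x / sum p' (V - {s})"
      using less.hyps[OF card_Diff1_less[OF fin s(1)]] E.censored_pairwise_positive less.prems(2,3)
        E.stationary_restricts_censored(2)[of p] E.stationary_restricts_censored(2)[of p']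
      unfolding V by blast
    then show ?thesis
      using E.stationary_eq_if_restrictions_eq less.prems(2,3) unfolding V by blast
  qed
qed

lemma pcmc_pi_is_stationary:
  assumes rates: "pairwise_positive_rates U q" and "U \<noteq> {}"
  shows "is_stationary U q (pcmc_pi U q)"
proof -
  obtain p where p: "is_stationary U q p"
    using stationary_exists[OF rates assms(2)] by blast
  define p0 where "p0 x = (if x \<in> U then p x else 0)" for x
  have p0: "is_stationary U q p0"
    using p unfolding is_stationary_def p0_def by simp
  have "\<exists>!p. is_stationary U q p \<and> (\<forall>x. x \<notin> U \<longrightarrow> p x = 0)"
  proof (rule ex1I[of _ p0])
    show "is_stationary U q p0 \<and> (\<forall>x. x \<notin> U \<longrightarrow> p0 x = 0)"
      using p0 by (simp add: p0_def)
    fix p' assume "is_stationary U q p' \<and> (\<forall>x. x \<notin> U \<longrightarrow> p' x = 0)"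
    then show "p' = p0"
      using stationary_unique[OF rates _ p0, of p'] by (auto simp: p0_def)
  qed
  from theI'[OF this] show ?thesis
    unfolding pcmc_pi_def by blast
qed

lemma partition_sum_blocks:
  assumes "is_partition U k A" "finite U" "J \<subseteq> {1..k}"
  shows "sum g (\<Union>m\<in>J. A m) = (\<Sum>m\<in>J. sum g (A m))"
proof (rule sum.UNION_disjoint)
  show "finite J" using assms(3) finite_subset by blast
  show "\<forall>m\<in>J. finite (A m)"
    using assms by (auto simp: is_partition_def intro: finite_subset)
  show "\<forall>m\<in>J. \<forall>j\<in>J. m \<noteq> j \<longrightarrow> A m \<inter> A j = {}"
    using assms unfolding is_partition_def by blast
qed

lemma partition_diff_block:
  assumes "is_partition U k A" "j \<in> {1..k}"
  shows "U - A j = (\<Union>m\<in>{1..k} - {j}. A m)"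
  using assms unfolding is_partition_def by blast

definition lumped_rates :: "(nat \<Rightarrow> 'a set) \<Rightarrow> (nat \<Rightarrow> nat \<Rightarrow> real) \<Rightarrow> nat \<Rightarrow> nat \<Rightarrow> real" where
  "lumped_rates A \<Lambda> m j = \<Lambda> m j * real (card (A j))"

lemma contractible_cross_block_sum:
  assumes "contractible_partition U q k A \<Lambda>" "m \<in> {1..k}" "j \<in> {1..k}" "m \<noteq> j" "a \<in> A m"
  shows "(\<Sum>b\<in>A j. rate_matrix U q a b) = lumped_rates A \<Lambda> m j"
proof -
  have "rate_matrix U q a b = \<Lambda> m j" if "b \<in> A j" for b
  proof -
    have "a \<noteq> b" using assms that unfolding contractible_partition_def is_partition_def by blast
    then show ?thesis using assms that by (simp add: rate_matrix_def contractible_partition_def)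
  qed
  then show ?thesis by (simp add: lumped_rates_def mult.commute)
qed

lemma contractible_block_sum:
  assumes "finite U" "contractible_partition U q k A \<Lambda>" "m \<in> {1..k}" "j \<in> {1..k}" "a \<in> A m"
  shows "(\<Sum>b\<in>A j. rate_matrix U q a b) = rate_matrix {1..k} (lumped_rates A \<Lambda>) m j"
proof (cases "m = j")
  case False
  then show ?thesis
    using contractible_cross_block_sum[OF assms(2-4) False assms(5)] by (simp add: rate_matrix_def)
next
  case True
  have part: "is_partition U k A" using assms(2) by (simp add: contractible_partition_def)
  then have "A j \<subseteq> U" using assms(4) by (auto simp: is_partition_def)
  then have "a \<in> U" using assms(5) True by blast
  have "(\<Sum>b\<in>A j. rate_matrix U q a b) = - (\<Sum>b\<in>U - A j. rate_matrix U q a b)"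
    using rate_matrix_row_sum[OF assms(1) \<open>a \<in> U\<close>, of q]
      sum.subset_diff[OF \<open>A j \<subseteq> U\<close> assms(1), of "rate_matrix U q a"]
    by linarith
  also have "(\<Sum>b\<in>U - A j. rate_matrix U q a b) = (\<Sum>l\<in>{1..k} - {j}. \<Sum>b\<in>A l. rate_matrix U q a b)"
    unfolding partition_diff_block[OF part assms(4)]
    using partition_sum_blocks[OF part assms(1)] by blast
  also have "\<dots> = (\<Sum>l\<in>{1..k} - {j}. lumped_rates A \<Lambda> j l)"
    using contractible_cross_block_sum[OF assms(2)] assms(4,5) True by simp
  finally show ?thesis
    using True by (simp add: rate_matrix_def)
qed

lemma lumped_is_stationary:
  assumes "finite U" "contractible_partition U q k A \<Lambda>" "is_stationary U q p"
  shows "is_stationary {1..k} (lumped_rates A \<Lambda>) (\<lambda>m. sum p (A m))"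
proof -
  have part: "is_partition U k A" using assms(2) by (simp add: contractible_partition_def)
  then have blocks_U: "(\<Union>m\<in>{1..k}. A m) = U" and block_sub: "\<And>m. m \<in> {1..k} \<Longrightarrow> A m \<subseteq> U"
    by (auto simp: is_partition_def)
  have sum_U: "sum g U = (\<Sum>m\<in>{1..k}. sum g (A m))" for g
    using partition_sum_blocks[OF part assms(1) order_refl] blocks_U by simp
  have "(\<Sum>m\<in>{1..k}. sum p (A m) * rate_matrix {1..k} (lumped_rates A \<Lambda>) m j) = 0"
    if j: "j \<in> {1..k}" for j
  proof -
    have "(\<Sum>m\<in>{1..k}. sum p (A m) * rate_matrix {1..k} (lumped_rates A \<Lambda>) m j)
        = (\<Sum>m\<in>{1..k}. \<Sum>a\<in>A m. p a * (\<Sum>b\<in>A j. rate_matrix U q a b))"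
      using contractible_block_sum[OF assms(1,2) _ j] by (simp add: sum_distrib_right)
    also have "\<dots> = (\<Sum>a\<in>U. p a * (\<Sum>b\<in>A j. rate_matrix U q a b))"
      by (rule sum_U[symmetric])
    also have "\<dots> = (\<Sum>b\<in>A j. \<Sum>a\<in>U. p a * rate_matrix U q a b)"
      by (simp add: sum_distrib_left sum.swap[of _ U])
    also have "\<dots> = 0"
      using assms(3) block_sub[OF j] by (auto simp: is_stationary_def intro: sum.neutral)
    finally show ?thesis .
  qed
  moreover have "\<forall>m\<in>{1..k}. 0 \<le> sum p (A m)"
    using assms(3) block_sub by (meson is_stationary_def subsetD sum_nonneg)
  moreover have "(\<Sum>m\<in>{1..k}. sum p (A m)) = 1"
    using assms(3) sum_U[of p] by (simp add: is_stationary_def)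
  ultimately show ?thesis
    by (simp add: is_stationary_def)
qed

lemma lumped_pairwise_positive:
  assumes "pcmc_rates U q" "contractible_partition U q k A \<Lambda>"
  shows "pairwise_positive_rates {1..k} (lumped_rates A \<Lambda>)"
  unfolding pairwise_positive_rates_def
proof (intro conjI[OF finite_atLeastAtMost] ballI impI)
  fix m j assume m: "m \<in> {1..k}" and j: "j \<in> {1..k}" and mj: "m \<noteq> j"
  have part: "is_partition U k A" using assms(2) by (simp add: contractible_partition_def)
  obtain a b where a: "a \<in> A m" and b: "b \<in> A j"
    using part m j unfolding is_partition_def by blast
  have blocks: "A m \<subseteq> U" "A j \<subseteq> U" "a \<noteq> b"
    using part m j mj a b unfolding is_partition_def by blast+
  then have "a \<in> U" "b \<in> U" "a \<noteq> b"
    using a b by blast+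
  moreover have "q a b = \<Lambda> m j" "q b a = \<Lambda> j m"
    using assms(2) m j mj a b unfolding contractible_partition_def by auto
  ultimately have \<Lambda>: "0 \<le> \<Lambda> m j" "0 \<le> \<Lambda> j m" "1 \<le> \<Lambda> m j + \<Lambda> j m"
    using assms(1) unfolding pcmc_rates_def by force+
  have card: "1 \<le> real (card (A m))" "1 \<le> real (card (A j))"
    using blocks a b assms(1) finite_subset[of _ U]
    by (auto simp: pcmc_rates_def Suc_le_eq card_gt_0_iff)
  have "\<Lambda> m j \<le> lumped_rates A \<Lambda> m j" "\<Lambda> j m \<le> lumped_rates A \<Lambda> j m"
    using mult_left_mono[OF card(2) \<Lambda>(1)] mult_left_mono[OF card(1) \<Lambda>(2)]
    by (simp_all add: lumped_rates_def)
  then show "0 \<le> lumped_rates A \<Lambda> m j \<and> 0 < lumped_rates A \<Lambda> m j + lumped_rates A \<Lambda> j m"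
    using \<Lambda> by linarith
qed

theorem proposition3:
  fixes U :: "'a set" and q q' :: "'a \<Rightarrow> 'a \<Rightarrow> real"
    and k :: nat and A :: "nat \<Rightarrow> 'a set" and \<Lambda> :: "nat \<Rightarrow> nat \<Rightarrow> real"
  assumes "finite U"
    and "pcmc_rates U q" and "pcmc_rates U q'"
    and "contractible_partition U q k A \<Lambda>" and "contractible_partition U q' k A \<Lambda>"
    and "i \<in> {1..k}"
  shows "(\<Sum>x\<in>A i. pcmc_pi U q x) = (\<Sum>x\<in>A i. pcmc_pi U q' x)"
proof -
  have "A i \<noteq> {}" "A i \<subseteq> U"
    using assms(4,6) unfolding contractible_partition_def is_partition_def by blast+
  then have "U \<noteq> {}" by blast
  then have "is_stationary U q (pcmc_pi U q)" "is_stationary U q' (pcmc_pi U q')"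
    using assms(2,3) by (simp_all add: pcmc_pi_is_stationary pcmc_rates_pairwise_positive)
  from lumped_is_stationary[OF assms(1,4) this(1)] lumped_is_stationary[OF assms(1,5) this(2)]
  show ?thesis
    using stationary_unique[OF lumped_pairwise_positive[OF assms(2,4)]] assms(6) by blast
qed

end
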